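(* Let $\Bbbk$ be a field, $S=\Bbbk[x_1,\ldots,x_n]$, $\prec$ a monomial order on $S$, $P=\{p_1,\ldots,p_m\}\subset\Bbbk^n$ distinct points, and $B$ the set of monomials outside $\mathrm{in}_\prec(I(P))$. Let $E=\{x_{i_1},\ldots,x_{i_{\bar n}}\}$ be a subset of the variables with $\mathrm{supp}(B)\subseteq E$, $|E|\le\min(m-1,n)$ and $E(P)$ of rank $|E|$. Let $\pi:\Bbbk^n\to\Bbbk^{\bar n}$, $\pi(a_1,\ldots,a_n)=(a_{i_1},\ldots,a_{i_{\bar n}})$, let $T=\Bbbk[y_{i_1},\ldots,y_{i_{\bar n}}]$ and $\pi^*:T\to S$ the monomorphism $y_{i_j}\mapsto x_{i_j}$. Let $\prec'$ be the monomial order on $T$ with $y^\alpha\prec'y^\beta$ iff $\pi^*(y^\alpha)\prec\pi^*(y^\beta)$, and let $B'$ be the set of monomials outside $\mathrm{in}_{\prec'}(I(\pi(P)))$. Then $\pi^*(B')=B$.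
   Context: $I(Q)$ denotes the vanishing ideal of a finite point set $Q$; $\mathrm{in}_\prec(I)$ is the ideal generated by leading monomials. The support of a set of monomials is the set of variables occurring with positive exponent in some of them. $E(P)$ is the $|E|\times m$ matrix whose rows are the evaluation vectors $(x(p_1),\ldots,x(p_m))$, $x\in E$. *)

theory Defs
  imports "HOL-Library.Poly_Mapping" "Jordan_Normal_Form.DL_Rank"
begin





type_synonym mon = "nat \<Rightarrow>\<^sub>0 nat"
type_synonym 'a mpoly = "mon \<Rightarrow>\<^sub>0 'a"

definition mons :: "nat \<Rightarrow> mon set" where
  "mons n = {\<alpha>. Poly_Mapping.keys \<alpha> \<subseteq> {..<n}}"

definition polys :: "nat \<Rightarrow> ('a::zero) mpoly set" where
  "polys n = {f. \<forall>\<alpha>\<in>Poly_Mapping.keys f. \<alpha> \<in> mons n}"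

definition eval_mon :: "mon \<Rightarrow> ('a::comm_semiring_1) list \<Rightarrow> 'a" where
  "eval_mon \<alpha> p = (\<Prod>i\<in>Poly_Mapping.keys \<alpha>. (p ! i) ^ Poly_Mapping.lookup \<alpha> i)"

definition eval :: "('a::comm_semiring_1) mpoly \<Rightarrow> 'a list \<Rightarrow> 'a" where
  "eval f p = (\<Sum>\<alpha>\<in>Poly_Mapping.keys f. Poly_Mapping.lookup f \<alpha> * eval_mon \<alpha> p)"

definition vanishing_ideal :: "nat \<Rightarrow> ('a::comm_semiring_1) list set \<Rightarrow> 'a mpoly set" where
  "vanishing_ideal n Q = {f \<in> polys n. \<forall>p\<in>Q. eval f p = 0}"

definition monomial_order :: "nat \<Rightarrow> (mon \<Rightarrow> mon \<Rightarrow> bool) \<Rightarrow> bool" where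
  "monomial_order n ord \<longleftrightarrow>
     (\<forall>\<alpha>\<in>mons n. \<not> ord \<alpha> \<alpha>) \<and>
     (\<forall>\<alpha>\<in>mons n. \<forall>\<beta>\<in>mons n. \<forall>\<gamma>\<in>mons n. ord \<alpha> \<beta> \<longrightarrow> ord \<beta> \<gamma> \<longrightarrow> ord \<alpha> \<gamma>) \<and>
     (\<forall>\<alpha>\<in>mons n. \<forall>\<beta>\<in>mons n. \<alpha> = \<beta> \<or> ord \<alpha> \<beta> \<or> ord \<beta> \<alpha>) \<and>
     (\<forall>\<alpha>\<in>mons n. \<alpha> \<noteq> 0 \<longrightarrow> ord 0 \<alpha>) \<and>
     (\<forall>\<alpha>\<in>mons n. \<forall>\<beta>\<in>mons n. \<forall>\<gamma>\<in>mons n. ord \<alpha> \<beta> \<longrightarrow> ord (\<alpha> + \<gamma>) (\<beta> + \<gamma>))"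

definition lead_mon :: "(mon \<Rightarrow> mon \<Rightarrow> bool) \<Rightarrow> ('a::zero) mpoly \<Rightarrow> mon" where
  "lead_mon ord f = (THE \<alpha>. \<alpha> \<in> Poly_Mapping.keys f \<and> (\<forall>\<beta>\<in>Poly_Mapping.keys f. \<beta> \<noteq> \<alpha> \<longrightarrow> ord \<beta> \<alpha>))"

definition gen_ideal :: "nat \<Rightarrow> ('a::comm_ring_1) mpoly set \<Rightarrow> 'a mpoly set" where
  "gen_ideal n G = {f. \<exists>A h. finite A \<and> A \<subseteq> G \<and> (\<forall>g\<in>A. h g \<in> polys n) \<and>
                          f = (\<Sum>g\<in>A. h g * g)}"

definition initial_ideal :: "nat \<Rightarrow> (mon \<Rightarrow> mon \<Rightarrow> bool) \<Rightarrow> ('a::comm_ring_1) mpoly set \<Rightarrow> 'a mpoly set" where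
  "initial_ideal n ord I =
     gen_ideal n {Poly_Mapping.single (lead_mon ord f) 1 | f. f \<in> I \<and> f \<noteq> 0}"

definition std_mons :: "nat \<Rightarrow> (mon \<Rightarrow> mon \<Rightarrow> bool) \<Rightarrow> ('a::comm_ring_1) mpoly set \<Rightarrow> mon set" where
  "std_mons n ord I =
     {\<alpha> \<in> mons n. (Poly_Mapping.single \<alpha> (1::'a)) \<notin> initial_ideal n ord I}"

definition supp :: "mon set \<Rightarrow> nat set" where
  "supp B = (\<Union>\<alpha>\<in>B. Poly_Mapping.keys \<alpha>)"

text \<open>Projection pi(a) = (a_{i_1},...,a_{i_nbar}) for the index list es = [i_1,...,i_nbar].\<close>
definition proj :: "nat list \<Rightarrow> 'a list \<Rightarrow> 'a list" where
  "proj es a = map (\<lambda>i. a ! i) es"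

text \<open>pi^* on monomials: y_j (standing for y_{i_j}) \<mapsto> x_{i_j}.\<close>
definition pistar_mon :: "nat list \<Rightarrow> mon \<Rightarrow> mon" where
  "pistar_mon es \<beta> = (\<Sum>j<length es. Poly_Mapping.single (es ! j) (Poly_Mapping.lookup \<beta> j))"

definition pulled_order :: "nat list \<Rightarrow> (mon \<Rightarrow> mon \<Rightarrow> bool) \<Rightarrow> mon \<Rightarrow> mon \<Rightarrow> bool" where
  "pulled_order es ord \<beta> \<gamma> \<longleftrightarrow> ord (pistar_mon es \<beta>) (pistar_mon es \<gamma>)"

definition eval_matrix :: "nat list \<Rightarrow> 'a list list \<Rightarrow> 'a mat" where
  "eval_matrix es ps = mat (length es) (length ps) (\<lambda>(r, c). (ps ! c) ! (es ! r))"

end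

theory Submission
  imports Defs "HOL-Library.Function_Algebras"
begin

text \<open>
  A monomial \<open>x\<^sup>\<alpha>\<close> lies outside \<open>in\<^sub>\<prec>(I(P))\<close> iff its evaluation vector on \<open>P\<close> is not a
  linear combination of the evaluation vectors of smaller monomials; by well-foundedness of \<open>\<prec>\<close>
  (Dickson's lemma) those smaller vectors are in turn spanned by smaller standard monomials.
  Every standard monomial only involves variables of \<open>E\<close>, so it is \<open>\<pi>\<^sup>*(y\<^sup>\<beta>)\<close>, and the
  evaluation vector of \<open>\<pi>\<^sup>*(y\<^sup>\<beta>)\<close> on \<open>P\<close> is that of \<open>y\<^sup>\<beta>\<close> on \<open>\<pi>(P)\<close> read through \<open>\<pi>\<close>.
  This pullback is linear and injective on functions supported on \<open>\<pi>(P)\<close>, and \<open>\<prec>'\<close> is \<open>\<prec>\<close>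
  transported along \<open>\<pi>\<^sup>*\<close>, so \<open>y\<^sup>\<beta>\<close> is standard for \<open>\<pi>(P)\<close> iff \<open>\<pi>\<^sup>*(y\<^sup>\<beta>)\<close> is standard for \<open>P\<close>.
\<close>

interpretation pointwise: module "\<lambda>(c::'a::comm_ring_1) (v::'b \<Rightarrow> 'a) x. c * v x"
  by unfold_locales (auto simp: fun_eq_iff algebra_simps)

lemma pointwise_module_homI:
  fixes \<Phi> :: "('b \<Rightarrow> 'a::comm_ring_1) \<Rightarrow> 'c \<Rightarrow> 'a"
  assumes "\<And>v w. \<Phi> (v + w) = \<Phi> v + \<Phi> w"
    and "\<And>c v. \<Phi> (\<lambda>x. c * v x) = (\<lambda>y. c * \<Phi> v y)"
  shows "module_hom (\<lambda>c v x. c * v x) (\<lambda>c v x. c * v x) \<Phi>"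
  using assms by (simp add: module_hom_iff pointwise.module_axioms)

lemma sum_fun_apply: "sum f A x = (\<Sum>a\<in>A. f a x)"
  by (induction A rule: infinite_finite_induct) auto

lemma mons_zero [simp]: "0 \<in> mons n"
  by (simp add: mons_def)

lemma mons_add: "\<alpha> \<in> mons n \<Longrightarrow> \<beta> \<in> mons n \<Longrightarrow> \<alpha> + \<beta> \<in> mons n"
  unfolding mons_def using keys_add[of \<alpha> \<beta>] by blast

lemma eval_mon_superset:
  "finite K \<Longrightarrow> Poly_Mapping.keys \<alpha> \<subseteq> K \<Longrightarrow>
   eval_mon \<alpha> p = (\<Prod>i\<in>K. (p ! i) ^ Poly_Mapping.lookup \<alpha> i)"
  unfolding eval_mon_def by (rule prod.mono_neutral_left) (auto simp: in_keys_iff)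

lemma eval_mon_add: "eval_mon (\<alpha> + \<beta>) p = eval_mon \<alpha> p * eval_mon \<beta> p"
proof -
  let ?K = "Poly_Mapping.keys \<alpha> \<union> Poly_Mapping.keys \<beta>"
  have "eval_mon (\<alpha> + \<beta>) p = (\<Prod>i\<in>?K. (p ! i) ^ Poly_Mapping.lookup (\<alpha> + \<beta>) i)"
    by (rule eval_mon_superset) (auto simp: keys_add)
  also have "\<dots> = (\<Prod>i\<in>?K. (p ! i) ^ Poly_Mapping.lookup \<alpha> i) * (\<Prod>i\<in>?K. (p ! i) ^ Poly_Mapping.lookup \<beta> i)"
    by (simp add: lookup_add power_add prod.distrib)
  also have "\<dots> = eval_mon \<alpha> p * eval_mon \<beta> p"
    by (simp add: eval_mon_superset[of ?K])
  finally show ?thesis .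
qed

lemma eval_superset:
  "finite K \<Longrightarrow> Poly_Mapping.keys f \<subseteq> K \<Longrightarrow>
   eval f p = (\<Sum>\<gamma>\<in>K. Poly_Mapping.lookup f \<gamma> * eval_mon \<gamma> p)"
  unfolding eval_def by (rule sum.mono_neutral_left) (auto simp: in_keys_iff)

lemma lookup_pistar_mon:
  "Poly_Mapping.lookup (pistar_mon es \<beta>) i = (\<Sum>j<length es. if es ! j = i then Poly_Mapping.lookup \<beta> j else 0)"
  unfolding pistar_mon_def by (simp add: lookup_sum lookup_single when_def)

lemma lookup_pistar_mon_nth:
  assumes "distinct es" "j < length es"
  shows "Poly_Mapping.lookup (pistar_mon es \<beta>) (es ! j) = Poly_Mapping.lookup \<beta> j"
proof -
  have "(es ! j' = es ! j) = (j' = j)" if "j' < length es" for j'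
    using assms that nth_eq_iff_index_eq by blast
  then have "Poly_Mapping.lookup (pistar_mon es \<beta>) (es ! j) =
      (\<Sum>j'<length es. if j' = j then Poly_Mapping.lookup \<beta> j' else 0)"
    unfolding lookup_pistar_mon by (intro sum.cong) auto
  then show ?thesis using assms by simp
qed

lemma lookup_pistar_mon_notin:
  "i \<notin> set es \<Longrightarrow> Poly_Mapping.lookup (pistar_mon es \<beta>) i = 0"
  unfolding lookup_pistar_mon by (intro sum.neutral) (auto simp del: nth_mem dest: nth_mem)

lemma keys_pistar_mon: "Poly_Mapping.keys (pistar_mon es \<beta>) \<subseteq> set es"
  using lookup_pistar_mon_notin by (metis in_keys_iff subsetI)

lemma pistar_mon_in_mons: "set es \<subseteq> {..<n} \<Longrightarrow> pistar_mon es \<beta> \<in> mons n"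
  using keys_pistar_mon unfolding mons_def by blast

lemma pistar_mon_add: "pistar_mon es (\<alpha> + \<beta>) = pistar_mon es \<alpha> + pistar_mon es \<beta>"
  by (rule poly_mapping_eqI)
    (unfold lookup_add lookup_pistar_mon sum.distrib[symmetric], rule sum.cong, auto)

lemma pistar_mon_zero [simp]: "pistar_mon es 0 = 0"
  by (rule poly_mapping_eqI) (simp add: lookup_pistar_mon)

lemma inj_on_pistar_mon:
  assumes "distinct es"
  shows "inj_on (pistar_mon es) (mons (length es))"
proof (rule inj_onI, rule poly_mapping_eqI)
  fix \<alpha> \<beta> j
  assume mons: "\<alpha> \<in> mons (length es)" "\<beta> \<in> mons (length es)"
    and eq: "pistar_mon es \<alpha> = pistar_mon es \<beta>"
  show "Poly_Mapping.lookup \<alpha> j = Poly_Mapping.lookup \<beta> j"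
  proof (cases "j < length es")
    case True
    then show ?thesis using eq lookup_pistar_mon_nth[OF assms True] by metis
  next
    case False
    then have "j \<notin> Poly_Mapping.keys \<alpha>" "j \<notin> Poly_Mapping.keys \<beta>"
      using mons by (auto simp: mons_def)
    then show ?thesis by (simp add: in_keys_iff)
  qed
qed

lemma pistar_mon_surj:
  assumes "distinct es" "Poly_Mapping.keys \<gamma> \<subseteq> set es"
  shows "\<gamma> \<in> pistar_mon es ` mons (length es)"
proof
  define \<alpha> where "\<alpha> = (\<Sum>j<length es. Poly_Mapping.single j (Poly_Mapping.lookup \<gamma> (es ! j)))"
  have lookup_\<alpha>: "Poly_Mapping.lookup \<alpha> j = (if j < length es then Poly_Mapping.lookup \<gamma> (es ! j) else 0)" for j
    unfolding \<alpha>_def by (simp add: lookup_sum lookup_single when_def)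
  show "\<alpha> \<in> mons (length es)"
    unfolding mons_def by (auto simp: in_keys_iff lookup_\<alpha> split: if_splits)
  show "\<gamma> = pistar_mon es \<alpha>"
  proof (rule poly_mapping_eqI)
    fix i
    show "Poly_Mapping.lookup \<gamma> i = Poly_Mapping.lookup (pistar_mon es \<alpha>) i"
    proof (cases "i \<in> set es")
      case True
      then obtain j where "j < length es" "i = es ! j" by (auto simp: in_set_conv_nth)
      then show ?thesis using lookup_pistar_mon_nth[OF assms(1)] lookup_\<alpha> by simp
    next
      case False
      then show ?thesis using assms(2) lookup_pistar_mon_notin[OF False] by (auto simp: in_keys_iff)
    qed
  qed
qed

lemma eval_mon_pistar_mon:
  assumes "distinct es" "\<alpha> \<in> mons (length es)"
  shows "eval_mon (pistar_mon es \<alpha>) p = eval_mon \<alpha> (proj es p)"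
proof -
  have "eval_mon (pistar_mon es \<alpha>) p = (\<Prod>i\<in>set es. (p ! i) ^ Poly_Mapping.lookup (pistar_mon es \<alpha>) i)"
    by (rule eval_mon_superset) (auto simp: keys_pistar_mon)
  also have "set es = (\<lambda>j. es ! j) ` {..<length es}"
    by (auto simp: in_set_conv_nth)
  also have "(\<Prod>i\<in>(\<lambda>j. es ! j) ` {..<length es}. (p ! i) ^ Poly_Mapping.lookup (pistar_mon es \<alpha>) i)
      = (\<Prod>j<length es. (p ! (es ! j)) ^ Poly_Mapping.lookup (pistar_mon es \<alpha>) (es ! j))"
    by (subst prod.reindex) (auto intro: inj_on_nth[OF assms(1)])
  also have "\<dots> = (\<Prod>j<length es. (proj es p ! j) ^ Poly_Mapping.lookup \<alpha> j)"
    by (intro prod.cong) (auto simp: lookup_pistar_mon_nth[OF assms(1)] proj_def)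
  also have "\<dots> = eval_mon \<alpha> (proj es p)"
    using assms(2) by (intro eval_mon_superset[symmetric]) (auto simp: mons_def)
  finally show ?thesis .
qed

section \<open>Monomial orders\<close>

lemma nat_seq_incseq_subseq:
  fixes g :: "nat \<Rightarrow> nat"
  obtains r where "strict_mono r" "incseq (g \<circ> r)"
proof -
  obtain r where r: "strict_mono r" "monoseq (g \<circ> r)"
    using seq_monosub[of g] by (auto simp: comp_def)
  show thesis
  proof (cases "incseq (g \<circ> r)")
    case True
    then show thesis using r(1) that by blast
  next
    case False
    then have dec: "decseq (g \<circ> r)" using r(2) by (simp add: monoseq_iff)
    define v where "v = (LEAST v. v \<in> range (g \<circ> r))"
    obtain N where N: "(g \<circ> r) N = v"
      using LeastI_ex[of "\<lambda>v. v \<in> range (g \<circ> r)"] by (auto simp: v_def)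
    have "(g \<circ> r) (k + N) = v" for k
    proof (rule antisym)
      show "(g \<circ> r) (k + N) \<le> v" using decseqD[OF dec, of N "k + N"] N by simp
      show "v \<le> (g \<circ> r) (k + N)" unfolding v_def by (rule Least_le) simp
    qed
    then have "incseq (g \<circ> (r \<circ> (\<lambda>k. k + N)))"
      by (simp add: incseq_def)
    moreover have "strict_mono (r \<circ> (\<lambda>k. k + N))"
      using r(1) by (simp add: strict_mono_def)
    ultimately show thesis using that by blast
  qed
qed

lemma exists_subseq_incseq_exponents:
  fixes f :: "nat \<Rightarrow> mon"
  obtains r where "strict_mono r" "\<And>l. l < d \<Longrightarrow> incseq (\<lambda>k. Poly_Mapping.lookup (f (r k)) l)"
proof (induction d arbitrary: thesis)
  case 0
  then show ?case using strict_mono_id by blast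
next
  case (Suc d)
  obtain r where r: "strict_mono r" "\<And>l. l < d \<Longrightarrow> incseq (\<lambda>k. Poly_Mapping.lookup (f (r k)) l)"
    using Suc.IH by blast
  obtain s where s: "strict_mono s" "incseq ((\<lambda>k. Poly_Mapping.lookup (f (r k)) d) \<circ> s)"
    using nat_seq_incseq_subseq by blast
  have "incseq (\<lambda>k. Poly_Mapping.lookup (f ((r \<circ> s) k)) l)" if "l < Suc d" for l
  proof (cases "l = d")
    case True
    then show ?thesis using s(2) by (simp add: comp_def)
  next
    case False
    then have inc: "incseq (\<lambda>k. Poly_Mapping.lookup (f (r k)) l)" using r(2) that by simp
    show ?thesis
      unfolding incseq_def comp_def
    proof (intro allI impI)
      fix m m' :: nat assume "m \<le> m'"
      then have "s m \<le> s m'" using strict_mono_less_eq[OF s(1)] by simp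
      then show "Poly_Mapping.lookup (f (r (s m))) l \<le> Poly_Mapping.lookup (f (r (s m'))) l"
        using inc by (simp add: incseq_def)
    qed
  qed
  then show ?case using Suc.prems strict_mono_o[OF r(1) s(1)] by blast
qed

lemma dickson:
  fixes f :: "nat \<Rightarrow> mon"
  assumes "\<And>i. f i \<in> mons n"
  obtains i j \<gamma> where "i < j" "\<gamma> \<in> mons n" "f j = f i + \<gamma>"
proof -
  obtain r where r: "strict_mono r" "\<And>l. l < n \<Longrightarrow> incseq (\<lambda>k. Poly_Mapping.lookup (f (r k)) l)"
    using exists_subseq_incseq_exponents by blast
  have le: "Poly_Mapping.lookup (f (r 0)) l \<le> Poly_Mapping.lookup (f (r 1)) l" for l
  proof (cases "l < n")
    case True
    then show ?thesis using r(2) by (simp add: incseq_def)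
  next
    case False
    then have "l \<notin> Poly_Mapping.keys (f (r 0))" using assms unfolding mons_def by auto
    then show ?thesis by (simp add: in_keys_iff)
  qed
  define \<gamma> where "\<gamma> = f (r 1) - f (r 0)"
  have "f (r 1) = f (r 0) + \<gamma>"
    by (rule poly_mapping_eqI) (use le in \<open>simp add: \<gamma>_def lookup_add lookup_minus\<close>)
  moreover have "Poly_Mapping.keys \<gamma> \<subseteq> Poly_Mapping.keys (f (r 1))"
    by (auto simp: \<gamma>_def in_keys_iff lookup_minus)
  then have "\<gamma> \<in> mons n" using assms unfolding mons_def by blast
  moreover have "r 0 < r 1" using r(1) by (simp add: strict_mono_def)
  ultimately show thesis using that by blast
qed

context
  fixes n :: nat and ord :: "mon \<Rightarrow> mon \<Rightarrow> bool"
  assumes mo: "monomial_order n ord"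
begin

lemma mo_irrefl: "\<alpha> \<in> mons n \<Longrightarrow> \<not> ord \<alpha> \<alpha>"
  using mo unfolding monomial_order_def by blast

lemma mo_trans: "\<alpha> \<in> mons n \<Longrightarrow> \<beta> \<in> mons n \<Longrightarrow> \<gamma> \<in> mons n \<Longrightarrow> ord \<alpha> \<beta> \<Longrightarrow> ord \<beta> \<gamma> \<Longrightarrow> ord \<alpha> \<gamma>"
  using mo unfolding monomial_order_def by blast

lemma mo_total: "\<alpha> \<in> mons n \<Longrightarrow> \<beta> \<in> mons n \<Longrightarrow> \<alpha> = \<beta> \<or> ord \<alpha> \<beta> \<or> ord \<beta> \<alpha>"
  using mo unfolding monomial_order_def by blast

lemma mo_zero_less: "\<alpha> \<in> mons n \<Longrightarrow> \<alpha> \<noteq> 0 \<Longrightarrow> ord 0 \<alpha>"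
  using mo unfolding monomial_order_def by blast

lemma mo_add_right: "\<alpha> \<in> mons n \<Longrightarrow> \<beta> \<in> mons n \<Longrightarrow> \<gamma> \<in> mons n \<Longrightarrow> ord \<alpha> \<beta> \<Longrightarrow> ord (\<alpha> + \<gamma>) (\<beta> + \<gamma>)"
  using mo unfolding monomial_order_def by blast

lemma mo_not_less_multiple:
  assumes "\<alpha> \<in> mons n" "\<gamma> \<in> mons n"
  shows "\<not> ord (\<alpha> + \<gamma>) \<alpha>"
proof (cases "\<gamma> = 0")
  case True
  then show ?thesis using mo_irrefl[OF assms(1)] by simp
next
  case False
  then have "ord (0 + \<alpha>) (\<gamma> + \<alpha>)"
    using mo_add_right[OF mons_zero assms(2,1)] mo_zero_less[OF assms(2)] by blast
  then have "ord \<alpha> (\<alpha> + \<gamma>)" by (simp add: add.commute)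
  then show ?thesis
    using mo_trans[OF assms(1) mons_add[OF assms] assms(1)] mo_irrefl[OF assms(1)] by blast
qed

lemma mo_wf: "wf {(\<beta>, \<alpha>). \<beta> \<in> mons n \<and> \<alpha> \<in> mons n \<and> ord \<beta> \<alpha>}"
  unfolding wf_iff_no_infinite_down_chain
proof (rule notI, elim exE)
  fix f assume "\<forall>i. (f (Suc i), f i) \<in> {(\<beta>, \<alpha>). \<beta> \<in> mons n \<and> \<alpha> \<in> mons n \<and> ord \<beta> \<alpha>}"
  then have chain: "\<And>i. f i \<in> mons n" "\<And>i. ord (f (Suc i)) (f i)" by auto
  have descending: "ord (f j) (f i)" if "i < j" for i j
    using that
  proof (induction j)
    case (Suc j)
    then show ?case using chain mo_trans[of "f (Suc j)" "f j" "f i"] by (cases "i = j") auto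
  qed simp
  obtain i j \<gamma> where ij: "i < j" and \<gamma>: "\<gamma> \<in> mons n" and fj: "f j = f i + \<gamma>"
    using dickson[of f n] chain(1) by blast
  then show False using descending[OF ij] mo_not_less_multiple[OF chain(1)[of i] \<gamma>] by simp
qed

lemma mo_greatest_exists:
  "finite K \<Longrightarrow> K \<noteq> {} \<Longrightarrow> K \<subseteq> mons n \<Longrightarrow> \<exists>\<alpha>\<in>K. \<forall>\<beta>\<in>K. \<beta> \<noteq> \<alpha> \<longrightarrow> ord \<beta> \<alpha>"
proof (induction K rule: finite_ne_induct)
  case (insert x F)
  then obtain \<alpha> where \<alpha>: "\<alpha> \<in> F" "\<forall>\<beta>\<in>F. \<beta> \<noteq> \<alpha> \<longrightarrow> ord \<beta> \<alpha>" by auto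
  consider "ord x \<alpha>" | "ord \<alpha> x"
    using mo_total[of x \<alpha>] insert \<alpha> by auto
  then show ?case
  proof cases
    case 1
    then show ?thesis using \<alpha> by auto
  next
    case 2
    have "ord \<beta> x" if "\<beta> \<in> F" for \<beta>
    proof (cases "\<beta> = \<alpha>")
      case False
      then show ?thesis using 2 \<alpha> that insert.prems mo_trans[of \<beta> \<alpha> x] by auto
    qed (use 2 in simp)
    then show ?thesis by (intro bexI[of _ x]) auto
  qed
qed simp

lemma lead_mon_eqI:
  assumes "f \<in> polys n" "\<alpha> \<in> Poly_Mapping.keys f" "\<forall>\<beta>\<in>Poly_Mapping.keys f. \<beta> \<noteq> \<alpha> \<longrightarrow> ord \<beta> \<alpha>"
  shows "lead_mon ord f = \<alpha>"
  unfolding lead_mon_def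
proof (rule the_equality)
  fix \<alpha>' assume \<alpha>': "\<alpha>' \<in> Poly_Mapping.keys f \<and> (\<forall>\<beta>\<in>Poly_Mapping.keys f. \<beta> \<noteq> \<alpha>' \<longrightarrow> ord \<beta> \<alpha>')"
  have mons: "\<alpha> \<in> mons n" "\<alpha>' \<in> mons n" using assms(1,2) \<alpha>' by (auto simp: polys_def)
  show "\<alpha>' = \<alpha>"
  proof (rule ccontr)
    assume "\<alpha>' \<noteq> \<alpha>"
    then have "ord \<alpha>' \<alpha>" "ord \<alpha> \<alpha>'" using assms(2,3) \<alpha>' by auto
    then show False using mo_trans[OF mons(2,1,2)] mo_irrefl[OF mons(2)] by blast
  qed
qed (use assms in simp)

lemma lead_mon_greatest:
  assumes "f \<in> polys n" "f \<noteq> 0"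
  shows "lead_mon ord f \<in> Poly_Mapping.keys f"
    and "\<And>\<beta>. \<beta> \<in> Poly_Mapping.keys f \<Longrightarrow> \<beta> \<noteq> lead_mon ord f \<Longrightarrow> ord \<beta> (lead_mon ord f)"
proof -
  obtain \<alpha> where "\<alpha> \<in> Poly_Mapping.keys f" "\<forall>\<beta>\<in>Poly_Mapping.keys f. \<beta> \<noteq> \<alpha> \<longrightarrow> ord \<beta> \<alpha>"
    using mo_greatest_exists[of "Poly_Mapping.keys f"] assms by (auto simp: polys_def)
  then show "lead_mon ord f \<in> Poly_Mapping.keys f"
    and "\<And>\<beta>. \<beta> \<in> Poly_Mapping.keys f \<Longrightarrow> \<beta> \<noteq> lead_mon ord f \<Longrightarrow> ord \<beta> (lead_mon ord f)"
    using lead_mon_eqI[OF assms(1)] by auto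
qed

end

lemma monomial_order_pulled_order:
  assumes mo: "monomial_order n ord" and "set es \<subseteq> {..<n}" and "distinct es"
  shows "monomial_order (length es) (pulled_order es ord)"
proof -
  have \<pi>: "\<And>\<alpha>. pistar_mon es \<alpha> \<in> mons n"
    using pistar_mon_in_mons assms(2) by blast
  have inj: "\<And>\<alpha> \<beta>. \<alpha> \<in> mons (length es) \<Longrightarrow> \<beta> \<in> mons (length es) \<Longrightarrow>
      pistar_mon es \<alpha> = pistar_mon es \<beta> \<Longrightarrow> \<alpha> = \<beta>"
    using inj_on_pistar_mon[OF assms(3)] by (auto dest: inj_onD)
  show ?thesis
    unfolding monomial_order_def pulled_order_def
  proof (intro conjI ballI impI)
    fix \<alpha> show "\<not> ord (pistar_mon es \<alpha>) (pistar_mon es \<alpha>)" using mo_irrefl[OF mo \<pi>] .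
  next
    fix \<alpha> \<beta> \<gamma> assume "ord (pistar_mon es \<alpha>) (pistar_mon es \<beta>)" "ord (pistar_mon es \<beta>) (pistar_mon es \<gamma>)"
    then show "ord (pistar_mon es \<alpha>) (pistar_mon es \<gamma>)" using mo_trans[OF mo \<pi> \<pi> \<pi>] by blast
  next
    fix \<alpha> \<beta> assume "\<alpha> \<in> mons (length es)" "\<beta> \<in> mons (length es)"
    then show "\<alpha> = \<beta> \<or> ord (pistar_mon es \<alpha>) (pistar_mon es \<beta>) \<or> ord (pistar_mon es \<beta>) (pistar_mon es \<alpha>)"
      using mo_total[OF mo \<pi> \<pi>] inj by blast
  next
    fix \<alpha> assume "\<alpha> \<in> mons (length es)" "\<alpha> \<noteq> 0"
    then have "pistar_mon es \<alpha> \<noteq> 0" using inj[OF _ mons_zero] by auto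
    then show "ord (pistar_mon es 0) (pistar_mon es \<alpha>)" using mo_zero_less[OF mo \<pi>] by simp
  next
    fix \<alpha> \<beta> \<gamma> assume "ord (pistar_mon es \<alpha>) (pistar_mon es \<beta>)"
    then show "ord (pistar_mon es (\<alpha> + \<gamma>)) (pistar_mon es (\<beta> + \<gamma>))"
      unfolding pistar_mon_add using mo_add_right[OF mo \<pi> \<pi> \<pi>] by blast
  qed
qed

section \<open>Standard monomials via evaluation vectors\<close>

text \<open>The vector \<open>(x\<^sup>\<alpha>(p))\<^sub>p\<^sub>\<in>\<^sub>P\<close>, extended by zero so that it lives in the module of all functions.\<close>

definition eval_vector :: "'a list set \<Rightarrow> mon \<Rightarrow> 'a list \<Rightarrow> 'a::comm_semiring_1" where
  "eval_vector P \<alpha> p = (if p \<in> P then eval_mon \<alpha> p else 0)"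

lemma eval_vector_add: "eval_vector P (\<alpha> + \<beta>) = eval_vector P \<alpha> * eval_vector P \<beta>"
  by (auto simp: fun_eq_iff eval_vector_def eval_mon_add)

context
  fixes n :: nat and ord :: "mon \<Rightarrow> mon \<Rightarrow> bool"
  assumes mo: "monomial_order n ord"
begin

lemma eval_vector_lead_mon_in_span:
  fixes f :: "'a::field mpoly"
  assumes f: "f \<in> vanishing_ideal n P" "f \<noteq> 0"
  shows "eval_vector P (lead_mon ord f) \<in> pointwise.span (eval_vector P ` {\<beta> \<in> mons n. ord \<beta> (lead_mon ord f)})"
proof -
  let ?\<mu> = "lead_mon ord f"
  have poly: "f \<in> polys n" using f(1) by (simp add: vanishing_ideal_def)
  define c where "c = Poly_Mapping.lookup f ?\<mu>"
  define K where "K = Poly_Mapping.keys f - {?\<mu>}"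
  have \<mu>: "?\<mu> \<in> Poly_Mapping.keys f" and smaller: "K \<subseteq> {\<beta> \<in> mons n. ord \<beta> ?\<mu>}"
    using lead_mon_greatest[OF mo poly f(2)] poly by (auto simp: K_def polys_def)
  have "c \<noteq> 0" using \<mu> by (simp add: c_def in_keys_iff)
  have eq: "eval_vector P ?\<mu> = (\<Sum>\<beta>\<in>K. (\<lambda>p. (- Poly_Mapping.lookup f \<beta> / c) * eval_vector P \<beta> p))"
  proof
    fix p
    show "eval_vector P ?\<mu> p = (\<Sum>\<beta>\<in>K. (\<lambda>p. (- Poly_Mapping.lookup f \<beta> / c) * eval_vector P \<beta> p)) p"
    proof (cases "p \<in> P")
      case True
      have "0 = eval f p" using f(1) True by (simp add: vanishing_ideal_def)
      also have "\<dots> = c * eval_mon ?\<mu> p + (\<Sum>\<beta>\<in>K. Poly_Mapping.lookup f \<beta> * eval_mon \<beta> p)"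
        unfolding eval_def K_def c_def using \<mu> by (simp add: sum.remove)
      finally show ?thesis
        using True \<open>c \<noteq> 0\<close>
        by (simp add: eval_vector_def sum_fun_apply sum_divide_distrib[symmetric] sum_negf
            field_simps eq_neg_iff_add_eq_0)
    qed (simp add: eval_vector_def sum_fun_apply)
  qed
  show ?thesis
    unfolding eq using smaller
    by (intro pointwise.span_sum pointwise.span_scale pointwise.span_base) auto
qed

lemma eval_vector_in_span_if_in_initial_ideal:
  fixes P :: "'a::field list set"
  assumes \<alpha>: "\<alpha> \<in> mons n"
    and in_ideal: "Poly_Mapping.single \<alpha> 1 \<in> initial_ideal n ord (vanishing_ideal n P)"
  shows "eval_vector P \<alpha> \<in> pointwise.span (eval_vector P ` {\<beta> \<in> mons n. ord \<beta> \<alpha>})"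
proof -
  obtain A h where A: "finite A"
      "A \<subseteq> {Poly_Mapping.single (lead_mon ord f) 1 | f. f \<in> vanishing_ideal n P \<and> f \<noteq> 0}"
      "\<forall>g\<in>A. h g \<in> polys n" "Poly_Mapping.single \<alpha> (1::'a) = (\<Sum>g\<in>A. h g * g)"
    using in_ideal unfolding initial_ideal_def gen_ideal_def by blast
  have "(\<Sum>g\<in>A. Poly_Mapping.lookup (h g * g) \<alpha>) \<noteq> 0"
    using arg_cong[OF A(4), of "\<lambda>q. Poly_Mapping.lookup q \<alpha>"] by (simp add: lookup_sum)
  then obtain g where g: "g \<in> A" "Poly_Mapping.lookup (h g * g) \<alpha> \<noteq> 0"
    by (rule sum.not_neutral_contains_not_neutral)
  obtain f where f: "g = Poly_Mapping.single (lead_mon ord f) 1" "f \<in> vanishing_ideal n P" "f \<noteq> 0"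
    using A(2) g(1) by blast
  let ?\<mu> = "lead_mon ord f"
  obtain \<gamma> where \<gamma>: "\<gamma> \<in> Poly_Mapping.keys (h g)" "\<alpha> = \<gamma> + ?\<mu>"
    using g(2) keys_mult[of "h g" g] f(1) by (auto simp: in_keys_iff)
  have \<gamma>_mons: "\<gamma> \<in> mons n" using \<gamma>(1) A(3) g(1) by (auto simp: polys_def)
  have \<mu>_mons: "?\<mu> \<in> mons n"
    using lead_mon_greatest(1)[OF mo _ f(3)] f(2) by (auto simp: vanishing_ideal_def polys_def)
  interpret mult: module_hom "\<lambda>c v x. c * v x" "\<lambda>c v x. c * v x" "(*) (eval_vector P \<gamma>)"
    by (rule pointwise_module_homI) (auto simp: fun_eq_iff algebra_simps)
  have "eval_vector P \<alpha> = eval_vector P \<gamma> * eval_vector P ?\<mu>"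
    by (simp add: \<gamma>(2) eval_vector_add)
  also have "\<dots> \<in> pointwise.span ((*) (eval_vector P \<gamma>) ` eval_vector P ` {\<beta> \<in> mons n. ord \<beta> ?\<mu>})"
    using eval_vector_lead_mon_in_span[OF f(2,3)] by (simp add: mult.span_image)
  also have "\<dots> \<subseteq> pointwise.span (eval_vector P ` {\<beta> \<in> mons n. ord \<beta> \<alpha>})"
  proof (rule pointwise.span_mono, clarsimp)
    fix \<beta> assume "\<beta> \<in> mons n" "ord \<beta> ?\<mu>"
    then have "\<gamma> + \<beta> \<in> mons n" "ord (\<gamma> + \<beta>) \<alpha>"
      using mons_add[OF \<gamma>_mons] mo_add_right[OF mo _ \<mu>_mons \<gamma>_mons] \<gamma>(2) by (auto simp: add.commute)
    then show "eval_vector P \<gamma> * eval_vector P \<beta> \<in> eval_vector P ` {\<beta> \<in> mons n. ord \<beta> \<alpha>}"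
      by (auto simp: eval_vector_add[symmetric])
  qed
  finally show ?thesis .
qed

lemma in_initial_ideal_if_eval_vector_in_span:
  fixes P :: "'a::field list set"
  assumes \<alpha>: "\<alpha> \<in> mons n"
    and in_span: "eval_vector P \<alpha> \<in> pointwise.span (eval_vector P ` {\<beta> \<in> mons n. ord \<beta> \<alpha>})"
  shows "Poly_Mapping.single \<alpha> 1 \<in> initial_ideal n ord (vanishing_ideal n P)"
proof -
  obtain t r where t: "finite t" "t \<subseteq> eval_vector P ` {\<beta> \<in> mons n. ord \<beta> \<alpha>}"
      "eval_vector P \<alpha> = (\<Sum>v\<in>t. (\<lambda>x. r v * v x))"
    using in_span unfolding pointwise.span_explicit by blast
  obtain A where A: "A \<subseteq> {\<beta> \<in> mons n. ord \<beta> \<alpha>}" "inj_on (eval_vector P) A" "t = eval_vector P ` A"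
    using t(2) by (auto simp: subset_image_inj)
  have "finite A" using A(2,3) t(1) finite_image_iff by blast
  define c where "c \<beta> = r (eval_vector P \<beta>)" for \<beta>
  text \<open>The relation among evaluation vectors is a polynomial of \<open>I(P)\<close> with leading monomial \<open>\<alpha>\<close>.\<close>
  define f :: "'a mpoly" where "f = Poly_Mapping.single \<alpha> 1 - (\<Sum>\<beta>\<in>A. Poly_Mapping.single \<beta> (c \<beta>))"
  have lookup_f: "Poly_Mapping.lookup f \<beta> = (if \<beta> = \<alpha> then 1 else 0) - (if \<beta> \<in> A then c \<beta> else 0)" for \<beta>
    using \<open>finite A\<close> by (simp add: f_def lookup_minus lookup_sum lookup_single when_def)
  have "\<alpha> \<notin> A" using A(1) mo_irrefl[OF mo \<alpha>] by auto
  have keys_f: "Poly_Mapping.keys f \<subseteq> insert \<alpha> A"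
    by (auto simp: in_keys_iff lookup_f split: if_splits)
  have f_poly: "f \<in> polys n" using keys_f A(1) \<alpha> unfolding polys_def by blast
  have \<alpha>_key: "\<alpha> \<in> Poly_Mapping.keys f" using \<open>\<alpha> \<notin> A\<close> by (simp add: in_keys_iff lookup_f)
  then have "f \<noteq> 0" by auto
  have "lead_mon ord f = \<alpha>"
    by (rule lead_mon_eqI[OF mo f_poly \<alpha>_key]) (use keys_f A(1) in blast)
  moreover have "f \<in> vanishing_ideal n P"
    unfolding vanishing_ideal_def
  proof (intro CollectI conjI ballI f_poly)
    fix p assume "p \<in> P"
    then have rel: "eval_mon \<alpha> p = (\<Sum>\<beta>\<in>A. c \<beta> * eval_mon \<beta> p)"
      using fun_cong[OF t(3), of p] A(2,3)
      by (simp add: sum_fun_apply sum.reindex c_def eval_vector_def)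
    have "eval f p = (\<Sum>\<beta>\<in>insert \<alpha> A. Poly_Mapping.lookup f \<beta> * eval_mon \<beta> p)"
      by (rule eval_superset) (use \<open>finite A\<close> keys_f in auto)
    also have "\<dots> = eval_mon \<alpha> p - (\<Sum>\<beta>\<in>A. c \<beta> * eval_mon \<beta> p)"
      using \<open>finite A\<close> \<open>\<alpha> \<notin> A\<close>
      by (simp add: lookup_f left_diff_distrib sum_subtractf) (auto intro: sum.neutral)
    finally show "eval f p = 0" using rel by simp
  qed
  ultimately have "Poly_Mapping.single \<alpha> 1 \<in>
      {Poly_Mapping.single (lead_mon ord f) 1 | f. f \<in> vanishing_ideal n P \<and> f \<noteq> (0::'a mpoly)}"
    using \<open>f \<noteq> 0\<close> by force
  moreover have "(1::'a mpoly) \<in> polys n" by (simp add: polys_def)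
  ultimately show ?thesis unfolding initial_ideal_def gen_ideal_def
    by (intro CollectI exI[of _ "{Poly_Mapping.single \<alpha> (1::'a)}"] exI[of _ "\<lambda>_. 1"]) auto
qed

lemma std_mons_iff_not_in_span:
  fixes P :: "'a::field list set"
  shows "\<alpha> \<in> std_mons n ord (vanishing_ideal n P) \<longleftrightarrow>
    \<alpha> \<in> mons n \<and> eval_vector P \<alpha> \<notin> pointwise.span (eval_vector P ` {\<beta> \<in> mons n. ord \<beta> \<alpha>})"
  unfolding std_mons_def
  using eval_vector_in_span_if_in_initial_ideal in_initial_ideal_if_eval_vector_in_span by blast

lemma span_smaller_std_mons:
  fixes P :: "'a::field list set"
  defines "B \<equiv> std_mons n ord (vanishing_ideal n P)"
  assumes "\<alpha> \<in> mons n"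
  shows "pointwise.span (eval_vector P ` {\<beta> \<in> mons n. ord \<beta> \<alpha>}) =
    pointwise.span (eval_vector P ` {\<beta> \<in> B. ord \<beta> \<alpha>})"
proof
  show "pointwise.span (eval_vector P ` {\<beta> \<in> B. ord \<beta> \<alpha>}) \<subseteq> pointwise.span (eval_vector P ` {\<beta> \<in> mons n. ord \<beta> \<alpha>})"
    by (intro pointwise.span_mono image_mono) (auto simp: B_def std_mons_def)
  show "pointwise.span (eval_vector P ` {\<beta> \<in> mons n. ord \<beta> \<alpha>}) \<subseteq> pointwise.span (eval_vector P ` {\<beta> \<in> B. ord \<beta> \<alpha>})"
    using assms(2)
  proof (induction \<alpha> rule: wf_induct[OF mo_wf[OF mo]])
    case (1 \<alpha>)
    have "eval_vector P \<beta> \<in> pointwise.span (eval_vector P ` {\<beta> \<in> B. ord \<beta> \<alpha>})"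
      if \<beta>: "\<beta> \<in> mons n" "ord \<beta> \<alpha>" for \<beta>
    proof (cases "\<beta> \<in> B")
      case True
      then show ?thesis using \<beta> by (intro pointwise.span_base) auto
    next
      case False
      then have "eval_vector P \<beta> \<in> pointwise.span (eval_vector P ` {\<delta> \<in> mons n. ord \<delta> \<beta>})"
        using \<beta>(1) by (simp add: B_def std_mons_iff_not_in_span)
      also have "\<dots> \<subseteq> pointwise.span (eval_vector P ` {\<delta> \<in> B. ord \<delta> \<beta>})"
        using 1 \<beta> by blast
      also have "\<dots> \<subseteq> pointwise.span (eval_vector P ` {\<delta> \<in> B. ord \<delta> \<alpha>})"
        using \<beta> 1(2) mo_trans[OF mo _ \<beta>(1) 1(2)]
        by (intro pointwise.span_mono image_mono) (auto simp: B_def std_mons_def)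
      finally show ?thesis .
    qed
    then show ?case by (intro pointwise.span_minimal) auto
  qed
qed

end

section \<open>Transfer along the projection\<close>

lemma eval_vector_pistar_mon_in_span_iff:
  fixes P :: "'a::field list set"
  assumes "distinct es" and \<alpha>: "\<alpha> \<in> mons (length es)" and S: "S \<subseteq> mons (length es)"
  shows "eval_vector P (pistar_mon es \<alpha>) \<in> pointwise.span (eval_vector P ` pistar_mon es ` S) \<longleftrightarrow>
    eval_vector (proj es ` P) \<alpha> \<in> pointwise.span (eval_vector (proj es ` P) ` S)"
proof -
  let ?Q = "proj es ` P"
  text \<open>Pulling functions on \<open>\<pi>(P)\<close> back to \<open>P\<close> is linear, and injective on functions
    vanishing off \<open>\<pi>(P)\<close>.\<close>
  define \<Phi> :: "('a list \<Rightarrow> 'a) \<Rightarrow> 'a list \<Rightarrow> 'a" where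
    "\<Phi> v = (\<lambda>p. if p \<in> P then v (proj es p) else 0)" for v
  define V where "V = {v :: 'a list \<Rightarrow> 'a. \<forall>q. q \<notin> ?Q \<longrightarrow> v q = 0}"
  interpret pullback: module_hom "\<lambda>c v x. c * v x" "\<lambda>c v x. c * v x" \<Phi>
    by (rule pointwise_module_homI) (auto simp: \<Phi>_def fun_eq_iff)
  have \<Phi>_eval_vector: "\<Phi> (eval_vector ?Q \<beta>) = eval_vector P (pistar_mon es \<beta>)"
    if "\<beta> \<in> mons (length es)" for \<beta>
    using that by (auto simp: \<Phi>_def eval_vector_def fun_eq_iff eval_mon_pistar_mon[OF assms(1)])
  have inj: "inj_on \<Phi> V"
  proof (rule inj_onI, rule ext)
    fix v w q assume "v \<in> V" "w \<in> V" "\<Phi> v = \<Phi> w"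
    then show "v q = w q"
      by (cases "q \<in> ?Q") (auto simp: V_def \<Phi>_def fun_eq_iff split: if_splits)
  qed
  have span_V: "pointwise.span (eval_vector ?Q ` S) \<subseteq> V"
    by (rule pointwise.span_minimal) (auto simp: V_def eval_vector_def pointwise.subspace_def)
  have \<alpha>_V: "eval_vector ?Q \<alpha> \<in> V" by (simp add: V_def eval_vector_def)
  have "eval_vector P ` pistar_mon es ` S = \<Phi> ` eval_vector ?Q ` S"
    unfolding image_image using S \<Phi>_eval_vector by (intro image_cong) auto
  then have "eval_vector P (pistar_mon es \<alpha>) \<in> pointwise.span (eval_vector P ` pistar_mon es ` S) \<longleftrightarrow>
      \<Phi> (eval_vector ?Q \<alpha>) \<in> \<Phi> ` pointwise.span (eval_vector ?Q ` S)"
    by (simp only: \<Phi>_eval_vector[OF \<alpha>] pullback.span_image)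
  also have "\<dots> \<longleftrightarrow> eval_vector ?Q \<alpha> \<in> pointwise.span (eval_vector ?Q ` S)"
    by (rule inj_on_image_mem_iff[OF inj \<alpha>_V span_V])
  finally show ?thesis .
qed

lemma pistar_mon_std_mons_iff:
  fixes P :: "'a::field list set"
  assumes ord: "monomial_order n ord" and es: "set es \<subseteq> {..<n}" "distinct es"
    and suppB: "supp (std_mons n ord (vanishing_ideal n P)) \<subseteq> set es"
    and \<alpha>: "\<alpha> \<in> mons (length es)"
  shows "pistar_mon es \<alpha> \<in> std_mons n ord (vanishing_ideal n P) \<longleftrightarrow>
    \<alpha> \<in> std_mons (length es) (pulled_order es ord) (vanishing_ideal (length es) (proj es ` P))"
proof -
  let ?k = "length es" and ?ord' = "pulled_order es ord" and ?\<pi> = "pistar_mon es"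
  let ?B = "std_mons n ord (vanishing_ideal n P)"
  let ?span = "\<lambda>S. pointwise.span (eval_vector P ` S)"
  have \<pi>\<alpha>: "?\<pi> \<alpha> \<in> mons n" using pistar_mon_in_mons[OF es(1)] .
  let ?below = "{\<beta> \<in> mons ?k. ?ord' \<beta> \<alpha>}"
  text \<open>The monomials below \<open>\<pi>\<^sup>* \<alpha>\<close> coming from \<open>T\<close> lie between the standard ones and all of them.\<close>
  have std_below: "{\<beta> \<in> ?B. ord \<beta> (?\<pi> \<alpha>)} \<subseteq> ?\<pi> ` ?below"
  proof clarify
    fix \<beta> assume \<beta>: "\<beta> \<in> ?B" "ord \<beta> (?\<pi> \<alpha>)"
    then have "Poly_Mapping.keys \<beta> \<subseteq> set es" using suppB by (auto simp: supp_def)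
    then obtain \<gamma> where "\<gamma> \<in> mons ?k" "\<beta> = ?\<pi> \<gamma>" using pistar_mon_surj[OF es(2)] by blast
    then show "\<beta> \<in> ?\<pi> ` ?below" using \<beta>(2) by (auto simp: pulled_order_def)
  qed
  have below_all: "?\<pi> ` ?below \<subseteq> {\<beta> \<in> mons n. ord \<beta> (?\<pi> \<alpha>)}"
    using pistar_mon_in_mons[OF es(1)] by (auto simp: pulled_order_def)
  have span_below: "?span (?\<pi> ` ?below) = ?span {\<beta> \<in> mons n. ord \<beta> (?\<pi> \<alpha>)}"
  proof (rule subset_antisym)
    show "?span (?\<pi> ` ?below) \<subseteq> ?span {\<beta> \<in> mons n. ord \<beta> (?\<pi> \<alpha>)}"
      using below_all by (intro pointwise.span_mono image_mono)
    have "?span {\<beta> \<in> mons n. ord \<beta> (?\<pi> \<alpha>)} = ?span {\<beta> \<in> ?B. ord \<beta> (?\<pi> \<alpha>)}"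
      by (rule span_smaller_std_mons[OF ord \<pi>\<alpha>])
    also have "\<dots> \<subseteq> ?span (?\<pi> ` ?below)"
      using std_below by (intro pointwise.span_mono image_mono)
    finally show "?span {\<beta> \<in> mons n. ord \<beta> (?\<pi> \<alpha>)} \<subseteq> ?span (?\<pi> ` ?below)" .
  qed
  have "?\<pi> \<alpha> \<in> ?B \<longleftrightarrow> eval_vector P (?\<pi> \<alpha>) \<notin> ?span {\<beta> \<in> mons n. ord \<beta> (?\<pi> \<alpha>)}"
    using std_mons_iff_not_in_span[OF ord] \<pi>\<alpha> by blast
  also have "\<dots> \<longleftrightarrow> eval_vector P (?\<pi> \<alpha>) \<notin> ?span (?\<pi> ` ?below)"
    by (simp only: span_below)
  also have "\<dots> \<longleftrightarrow> eval_vector (proj es ` P) \<alpha> \<notin> pointwise.span (eval_vector (proj es ` P) ` ?below)"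
    using eval_vector_pistar_mon_in_span_iff[OF es(2) \<alpha>, of ?below P] by blast
  also have "\<dots> \<longleftrightarrow> \<alpha> \<in> std_mons ?k ?ord' (vanishing_ideal ?k (proj es ` P))"
    using std_mons_iff_not_in_span[OF monomial_order_pulled_order[OF ord es]] \<alpha> by blast
  finally show ?thesis .
qed

theorem mainTheorem14:
  fixes n :: nat
    and ord :: "mon \<Rightarrow> mon \<Rightarrow> bool"
    and ps :: "('a::field) list list"
    and es :: "nat list"
  assumes ord: "monomial_order n ord"
    and pts: "\<forall>p\<in>set ps. length p = n"
    and dist: "distinct ps"
    and es_vars: "set es \<subseteq> {..<n}"
    and es_dist: "distinct es"
    and suppB: "supp (std_mons n ord (vanishing_ideal n (set ps))) \<subseteq> set es"
    and card_le: "length es + 1 \<le> length ps" "length es \<le> n"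
    and rank: "vec_space.rank (length es) (eval_matrix es ps) = length es"
  shows "pistar_mon es `
           std_mons (length es) (pulled_order es ord)
             (vanishing_ideal (length es) (proj es ` set ps))
         = std_mons n ord (vanishing_ideal n (set ps))"
proof -
  let ?B = "std_mons n ord (vanishing_ideal n (set ps))"
  let ?B' = "std_mons (length es) (pulled_order es ord) (vanishing_ideal (length es) (proj es ` set ps))"
  have std_iff: "pistar_mon es \<alpha> \<in> ?B \<longleftrightarrow> \<alpha> \<in> ?B'" if "\<alpha> \<in> mons (length es)" for \<alpha>
    using pistar_mon_std_mons_iff[OF ord es_vars es_dist suppB that] .
  have "?B \<subseteq> pistar_mon es ` mons (length es)"
  proof
    fix \<beta> assume "\<beta> \<in> ?B"
    then have "Poly_Mapping.keys \<beta> \<subseteq> set es" using suppB by (auto simp: supp_def)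
    then show "\<beta> \<in> pistar_mon es ` mons (length es)" by (rule pistar_mon_surj[OF es_dist])
  qed
  moreover have "?B' \<subseteq> mons (length es)" by (auto simp: std_mons_def)
  ultimately show ?thesis using std_iff by blast
qed

end
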